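(* Let $d\ge3$ and let $(X_{t,1},\dots,X_{t,d})$, $t=1,\dots,T$, be i.i.d. binary random vectors, each following a determinantal point process with correlation kernel $K_0^*$, where $K_0^*$ is real symmetric with all eigenvalues in $(0,1)$, all entries of $K_0^*$ are nonzero, and $K^*_{0,1i}>0$ for $i=2,\dots,d$. Define the estimator $\widehat{K^*_T}$ (a symmetric matrix) by $\widehat{K^*_{ii}}=\frac1T\sum_{t=1}^T X_{t,i}$; for $i<j$, $\widehat{|K^*_{ij}|}=\sqrt{-\widehat{\mathrm{Cov}}(X_i,X_j)}$ with $-\widehat{\mathrm{Cov}}(X_i,X_j)=\widehat{K^*_{ii}}\widehat{K^*_{jj}}-\frac1T\sum_{t=1}^T X_{t,i}X_{t,j}$; $\widehat{K^*_{1j}}=\widehat{|K^*_{1j}|}$ for $j\ge2$; for $1<i<j\le d$, $\widehat{K^*_{ij}}=\widehat{\mathrm{sgn}}_{ij}\cdot\widehat{|K^*_{ij}|}$, where $$\widehat{\mathrm{sgn}}_{ij}=\mathrm{sgn}\Big(\tfrac1T\textstyle\sum_{t}X_{t,1}X_{t,i}X_{t,j}-\widehat{K^*_{11}}\widehat{K^*_{ii}}\widehat{K^*_{jj}}+\widehat{K^*_{11}}\widehat{|K^*_{ij}|}^2+\widehat{K^*_{ii}}\widehat{|K^*_{1j}|}^2+\widehat{K^*_{jj}}\widehat{|K^*_{1i}|}^2\Big);$$ and $\widehat{K^*_{ji}}=\widehat{K^*_{ij}}$. Then $\widehat{K^*_T}\to K_0^*$ almost surely as $T\to\infty$. In particular,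 almost surely, for all $T$ large enough: $-\widehat{\mathrm{Cov}}(X_i,X_j)\ge0$ for all $i<j$ (so $\widehat{|K^*_{ij}|}$ is well defined), and $\mathrm{sgn}(\widehat{K^*_{ij}})=\mathrm{sgn}(K^*_{0,ij})$ for all $i,j$.
   Context: A binary random vector $(X_1,\dots,X_d)$ follows a determinantal point process with correlation kernel $K$ if $\mathbb{P}[X_j=1\ \forall j\in s]=\det K_s$ for every $s\subseteq\{1,\dots,d\}$, where $K_s$ is the principal submatrix of $K$ with rows and columns in $s$. $\mathrm{sgn}(x)$ is $1,-1,0$ according as $x>0$, $x<0$, $x=0$. For finitely many $T$ the defining expressions may be undefined (negative quantity under a square root, or zero sign); the value of the estimator on that event is fixed by an arbitrary convention and plays no role in the statement. *)

theory Defs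
  imports "HOL-Probability.Probability" "HOL-Combinatorics.Permutations"
begin

text \<open>Matrices are functions nat => nat => real; only indices in {1..d} matter.\<close>

definition det_on :: "nat set \<Rightarrow> (nat \<Rightarrow> nat \<Rightarrow> real) \<Rightarrow> real" where
  "det_on s K = (\<Sum>p\<in>{p. p permutes s}. of_int (sign p) * (\<Prod>i\<in>s. K i (p i)))"

definition is_eigenvalue :: "nat \<Rightarrow> (nat \<Rightarrow> nat \<Rightarrow> real) \<Rightarrow> real \<Rightarrow> bool" where
  "is_eigenvalue d K lam \<longleftrightarrow> (\<exists>v::nat \<Rightarrow> real. (\<exists>i\<in>{1..d}. v i \<noteq> 0) \<and>
      (\<forall>i\<in>{1..d}. (\<Sum>j\<in>{1..d}. K i j * v j) = lam * v i))"

text \<open>A random binary vector is encoded by the set of coordinates equal to 1;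
  X_{t,j} = xval X t j w.\<close>
definition xval :: "(nat \<Rightarrow> 'a \<Rightarrow> nat set) \<Rightarrow> nat \<Rightarrow> nat \<Rightarrow> 'a \<Rightarrow> real" where
  "xval X t j w = (if j \<in> X t w then 1 else 0)"

text \<open>Sample with observations t = 0,...,T-1.\<close>
definition Kdiag_hat :: "(nat \<Rightarrow> 'a \<Rightarrow> nat set) \<Rightarrow> nat \<Rightarrow> 'a \<Rightarrow> nat \<Rightarrow> real" where
  "Kdiag_hat X T w i = (1 / real T) * (\<Sum>t<T. xval X t i w)"

definition negcov_hat :: "(nat \<Rightarrow> 'a \<Rightarrow> nat set) \<Rightarrow> nat \<Rightarrow> 'a \<Rightarrow> nat \<Rightarrow> nat \<Rightarrow> real" where
  "negcov_hat X T w i j = Kdiag_hat X T w i * Kdiag_hat X T w j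
      - (1 / real T) * (\<Sum>t<T. xval X t i w * xval X t j w)"

definition absK_hat :: "(nat \<Rightarrow> 'a \<Rightarrow> nat set) \<Rightarrow> nat \<Rightarrow> 'a \<Rightarrow> nat \<Rightarrow> nat \<Rightarrow> real" where
  "absK_hat X T w i j = sqrt (negcov_hat X T w i j)"

definition sgn_hat :: "(nat \<Rightarrow> 'a \<Rightarrow> nat set) \<Rightarrow> nat \<Rightarrow> 'a \<Rightarrow> nat \<Rightarrow> nat \<Rightarrow> real" where
  "sgn_hat X T w i j = sgn ((1 / real T) * (\<Sum>t<T. xval X t 1 w * xval X t i w * xval X t j w)
      - Kdiag_hat X T w 1 * Kdiag_hat X T w i * Kdiag_hat X T w j
      + Kdiag_hat X T w 1 * (absK_hat X T w i j)\<^sup>2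
      + Kdiag_hat X T w i * (absK_hat X T w 1 j)\<^sup>2
      + Kdiag_hat X T w j * (absK_hat X T w 1 i)\<^sup>2)"

text \<open>Estimator entries for i < j (index 1 is the reference coordinate).\<close>
definition Kupper_hat :: "(nat \<Rightarrow> 'a \<Rightarrow> nat set) \<Rightarrow> nat \<Rightarrow> 'a \<Rightarrow> nat \<Rightarrow> nat \<Rightarrow> real" where
  "Kupper_hat X T w i j =
     (if i = 1 then absK_hat X T w 1 j else sgn_hat X T w i j * absK_hat X T w i j)"

definition K_hat :: "(nat \<Rightarrow> 'a \<Rightarrow> nat set) \<Rightarrow> nat \<Rightarrow> 'a \<Rightarrow> nat \<Rightarrow> nat \<Rightarrow> real" where
  "K_hat X T w i j =
     (if i = j then Kdiag_hat X T w i else Kupper_hat X T w (min i j) (max i j))"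

end

theory Submission
  imports Defs
begin

text \<open>
  For a determinantal process \<open>P[s \<subseteq> X] = det K_s\<close>, so each empirical inclusion frequency
  is an average of i.i.d. bounded indicators and converges almost surely to a principal minor
  of \<open>K\<close> (strong law of large numbers, via Hoeffding's inequality and Borel-Cantelli).
  On the almost sure event where all frequencies converge, the estimator is a continuous function
  of them: the diagonal estimates \<open>P[i \<in> X] = K_ii\<close>, the negated covariance tends to
  \<open>K_ii K_jj - det K_{i,j} = K_ij\<^sup>2\<close>, and expanding the minor on \<open>{1, i, j}\<close> shows that the
  statistic inside the estimated sign tends to \<open>2 K_1i K_1j K_ij\<close>, whose sign is that of \<open>K_ij\<close>
  because the first row is positive.  Since no entry of \<open>K\<close> vanishes, all signs are eventually
  correct.
\<close>

lemma dist_average_less: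
  fixes S \<mu> e :: real
  assumes "n > 0" and "\<bar>S - real n * \<mu>\<bar> < real n * e"
  shows "dist ((1 / real n) * S) \<mu> < e"
proof -
  have "(1 / real n) * S - \<mu> = (S - real n * \<mu>) / real n"
    using assms(1) by (simp add: field_simps)
  then have "dist ((1 / real n) * S) \<mu> = \<bar>S - real n * \<mu>\<bar> / real n"
    by (simp add: dist_real_def)
  also have "\<dots> < e"
    using assms by (simp add: pos_divide_less_eq algebra_simps)
  finally show ?thesis .
qed

locale indep_bounded_sequence = prob_space +
  fixes Y :: "nat \<Rightarrow> 'a \<Rightarrow> real" and a b \<mu> :: real
  assumes indep: "indep_vars (\<lambda>_. borel) Y UNIV"
    and bounded: "\<And>t w. w \<in> space M \<Longrightarrow> Y t w \<in> {a..b}"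
    and nondegenerate: "a < b"
    and expectation_eq: "\<And>t. expectation (Y t) = \<mu>"
begin

lemma measurable_Y [measurable]: "Y t \<in> borel_measurable M"
  using indep by (auto simp: indep_vars_def)

lemma prob_sum_deviation_le:
  assumes "e \<ge> 0"
  shows "prob {w \<in> space M. real n * e \<le> \<bar>(\<Sum>t<n. Y t w) - real n * \<mu>\<bar>}
           \<le> 2 * exp (-2 * e\<^sup>2 / (b - a)\<^sup>2) ^ n"
proof (cases "n = 0")
  case True
  then show ?thesis
    by (simp add: prob_space)
next
  case False
  interpret Hoeffding_ineq M "{..<n}" Y "\<lambda>_. a" "\<lambda>_. b" "real n * \<mu>"
  proof unfold_locales
    show "indep_vars (\<lambda>_. borel) Y {..<n}"
      by (rule indep_vars_subset[OF indep]) simp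
    show "AE w in M. Y t w \<in> {a..b}" for t
      using bounded by simp
    show "real n * \<mu> \<equiv> \<Sum>t<n. expectation (Y t)"
      by (simp add: expectation_eq)
  qed simp
  have "prob {w \<in> space M. real n * e \<le> \<bar>(\<Sum>t<n. Y t w) - real n * \<mu>\<bar>}
      \<le> 2 * exp (-2 * (real n * e)\<^sup>2 / (\<Sum>t<n. (b - a)\<^sup>2))"
    by (rule Hoeffding_ineq_abs_ge) (use assms False nondegenerate in auto)
  also have "-2 * (real n * e)\<^sup>2 / (\<Sum>t<n. (b - a)\<^sup>2) = real n * (-2 * e\<^sup>2 / (b - a)\<^sup>2)"
    using False nondegenerate by (simp add: field_simps power2_eq_square[of "real n"])
  also have "exp (real n * (-2 * e\<^sup>2 / (b - a)\<^sup>2)) = exp (-2 * e\<^sup>2 / (b - a)\<^sup>2) ^ n"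
    by (rule exp_of_nat_mult)
  finally show ?thesis .
qed

lemma AE_eventually_dist_mean_less:
  assumes "e > 0"
  shows "AE w in M. eventually (\<lambda>n. dist ((1 / real n) * (\<Sum>t<n. Y t w)) \<mu> < e) sequentially"
proof -
  define A where "A n = {w \<in> space M. real n * e \<le> \<bar>(\<Sum>t<n. Y t w) - real n * \<mu>\<bar>}" for n
  define q where "q = exp (-2 * e\<^sup>2 / (b - a)\<^sup>2)"
  have "q < 1"
    using assms nondegenerate by (simp add: q_def)
  have borel_cantelli: "AE w in M. eventually (\<lambda>n. w \<in> space M - A n) sequentially"
  proof (rule borel_cantelli_AE1)
    show "A n \<in> sets M" for n
      unfolding A_def by measurable
    show "emeasure M (A n) < \<infinity>" for n
      by (simp add: emeasure_eq_measure)
    show "summable (\<lambda>n. measure M (A n))"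
    proof (rule summable_comparison_test)
      show "\<exists>N. \<forall>n\<ge>N. norm (measure M (A n)) \<le> 2 * q ^ n"
        using prob_sum_deviation_le assms by (auto simp: A_def q_def)
      show "summable (\<lambda>n. 2 * q ^ n)"
        using \<open>q < 1\<close> by (intro summable_mult summable_geometric) (simp add: q_def)
    qed
  qed
  have pointwise: "eventually (\<lambda>n. dist ((1 / real n) * (\<Sum>t<n. Y t w)) \<mu> < e) sequentially"
    if "eventually (\<lambda>n. w \<in> space M - A n) sequentially" for w
  proof -
    have "eventually (\<lambda>n. n > 0 \<and> w \<in> space M - A n) sequentially"
      using that by (intro eventually_conj eventually_gt_at_top)
    then show ?thesis
      by (rule eventually_mono) (rule dist_average_less; simp add: A_def not_le)
  qed
  show ?thesis
    using borel_cantelli by (rule eventually_mono) (rule pointwise)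
qed

theorem AE_mean_tendsto:
  "AE w in M. (\<lambda>n. (1 / real n) * (\<Sum>t<n. Y t w)) \<longlonglongrightarrow> \<mu>"
proof -
  have "AE w in M. \<forall>m. eventually
      (\<lambda>n. dist ((1 / real n) * (\<Sum>t<n. Y t w)) \<mu> < 1 / real (Suc m)) sequentially"
    by (simp only: AE_all_countable) (intro allI AE_eventually_dist_mean_less; simp)
  then show ?thesis
  proof (rule AE_mp[OF _ AE_I2], intro impI)
    fix w
    assume close: "\<forall>m. eventually
      (\<lambda>n. dist ((1 / real n) * (\<Sum>t<n. Y t w)) \<mu> < 1 / real (Suc m)) sequentially"
    show "(\<lambda>n. (1 / real n) * (\<Sum>t<n. Y t w)) \<longlonglongrightarrow> \<mu>"
    proof (rule tendstoI)
      fix e :: real assume "e > 0"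
      then obtain m where m: "1 / real (Suc m) < e"
        using reals_Archimedean by (auto simp: inverse_eq_divide)
      show "eventually (\<lambda>n. dist ((1 / real n) * (\<Sum>t<n. Y t w)) \<mu> < e) sequentially"
        using close[rule_format, of m] by (rule eventually_mono) (use m in linarith)
    qed
  qed
qed

end

lemma sign_transpose_comp:
  assumes "q permutes S" "finite S"
  shows "sign (Transposition.transpose a b \<circ> q) = (if a = b then 1 else -1) * sign q"
  using assms
  by (subst sign_compose) (auto simp: sign_swap_id intro: permutation_swap_id permutation_permutes[THEN iffD2])

lemma det_on_insert:
  assumes "finite S" "a \<notin> S"
  shows "det_on (insert a S) K = (\<Sum>b\<in>insert a S. \<Sum>q\<in>{p. p permutes S}.
     of_int (sign (Transposition.transpose a b \<circ> q))
       * (\<Prod>i\<in>insert a S. K i ((Transposition.transpose a b \<circ> q) i)))"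
  unfolding det_on_def by (rule sum_over_permutations_insert[OF assms])

lemma det_on_singleton: "det_on {a} K = K a a"
  using det_on_insert[of "{}" a K] by simp

lemma det_on_doubleton:
  assumes "a \<noteq> b"
  shows "det_on {a, b} K = K a a * K b b - K a b * K b a"
  using assms det_on_insert[of "{b}" a K]
  by (simp add: sign_swap_id sign_transpose_comp permutation_swap_id)

lemma det_on_three:
  assumes "a \<noteq> b" "a \<noteq> c" "b \<noteq> c"
  shows "det_on {a, b, c} K = K a a * K b b * K c c - K a a * K b c * K c b
     - K a b * K b a * K c c + K a b * K b c * K c a + K a c * K b a * K c b
     - K a c * K b b * K c a"
proof -
  let ?\<tau> = "Transposition.transpose"
  have "det_on {a, b, c} K = (\<Sum>x\<in>{a, b, c}. \<Sum>q\<in>{p. p permutes {b, c}}.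
     of_int (sign (?\<tau> a x \<circ> q)) * (\<Prod>i\<in>{a, b, c}. K i ((?\<tau> a x \<circ> q) i)))"
    using det_on_insert[of "{b, c}" a K] assms by simp
  also have "\<dots> = (\<Sum>x\<in>{a, b, c}. \<Sum>y\<in>{b, c}. of_int (sign (?\<tau> a x \<circ> ?\<tau> b y))
        * (\<Prod>i\<in>{a, b, c}. K i ((?\<tau> a x \<circ> ?\<tau> b y) i)))"
    using assms
    by (intro sum.cong refl, subst sum_over_permutations_insert[of "{c}" b]) auto
  also have "\<dots> = K a a * K b b * K c c - K a a * K b c * K c b
     - K a b * K b a * K c c + K a b * K b c * K c a + K a c * K b a * K c b
     - K a c * K b b * K c a"
    using assms
    by (simp add: sign_compose permutation_swap_id sign_swap_id Transposition.transpose_def algebra_simps)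
  finally show ?thesis .
qed

lemma det_on_three_symmetric:
  assumes "a \<noteq> b" "a \<noteq> c" "b \<noteq> c"
    and "K a b = K b a" "K a c = K c a" "K b c = K c b"
  shows "det_on {a, b, c} K - K a a * K b b * K c c
           + K a a * (K b c)\<^sup>2 + K b b * (K a c)\<^sup>2 + K c c * (K a b)\<^sup>2
         = 2 * K a b * K a c * K b c"
  using assms by (simp add: det_on_three power2_eq_square algebra_simps)

definition empirical_freq :: "(nat \<Rightarrow> 'a \<Rightarrow> nat set) \<Rightarrow> nat \<Rightarrow> 'a \<Rightarrow> nat set \<Rightarrow> real" where
  "empirical_freq X T w s = (1 / real T) * (\<Sum>t<T. if s \<subseteq> X t w then 1 else 0)"

lemma Kdiag_hat_eq_empirical_freq: "Kdiag_hat X T w i = empirical_freq X T w {i}"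
  by (simp add: Kdiag_hat_def empirical_freq_def xval_def)

lemma negcov_hat_eq_empirical_freq:
  "negcov_hat X T w i j = Kdiag_hat X T w i * Kdiag_hat X T w j - empirical_freq X T w {i, j}"
  unfolding negcov_hat_def empirical_freq_def xval_def
  by (intro arg_cong[where f = "\<lambda>x. _ - _ * x"] sum.cong) auto

lemma triple_moment_eq_empirical_freq:
  "(1 / real T) * (\<Sum>t<T. xval X t i w * xval X t j w * xval X t k w) = empirical_freq X T w {i, j, k}"
  unfolding empirical_freq_def xval_def by (intro arg_cong[where f = "(*) _"] sum.cong) auto

lemma AE_empirical_freq_tendsto:
  assumes "prob_space M"
    and indep: "prob_space.indep_vars M (\<lambda>_. count_space (Pow D)) X UNIV"
    and inclusion_prob: "\<And>t. measure M {w \<in> space M. s \<subseteq> X t w} = p"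
  shows "AE w in M. (\<lambda>T. empirical_freq X T w s) \<longlonglongrightarrow> p"
proof -
  interpret prob_space M by fact
  let ?Y = "\<lambda>t w. if s \<subseteq> X t w then 1 else 0 :: real"
  have "expectation (?Y t) = p" for t
  proof -
    have X_measurable: "X t \<in> measurable M (count_space (Pow D))"
      using indep by (auto simp: indep_vars_def)
    have "{w \<in> space M. s \<subseteq> X t w} = X t -` {A \<in> Pow D. s \<subseteq> A} \<inter> space M"
      using measurable_space[OF X_measurable] by auto
    also have "\<dots> \<in> sets M"
      by (rule measurable_sets[OF X_measurable]) auto
    finally have "{w \<in> space M. s \<subseteq> X t w} \<in> sets M" .
    moreover have "expectation (?Y t) = expectation (indicator {w \<in> space M. s \<subseteq> X t w})"
      by (rule Bochner_Integration.integral_cong) (auto simp: indicator_def)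
    ultimately show ?thesis
      using inclusion_prob by simp
  qed
  moreover have "indep_vars (\<lambda>_. borel) ?Y UNIV"
    by (rule indep_vars_compose2[OF indep, where Y = "\<lambda>_ A. if s \<subseteq> A then 1 else 0"]) simp
  ultimately interpret indep_bounded_sequence M ?Y 0 1 p
    by unfold_locales auto
  show ?thesis
    using AE_mean_tendsto by (simp add: empirical_freq_def)
qed

lemma eventually_sgn_eq_sgn_limit:
  fixes f :: "'b \<Rightarrow> real"
  assumes "(f \<longlongrightarrow> l) F" and "l \<noteq> 0"
  shows "eventually (\<lambda>x. sgn (f x) = sgn l) F"
proof (cases "l > 0")
  case True
  from order_tendstoD(1)[OF assms(1) this] show ?thesis
    by eventually_elim (simp add: True)
next
  case False
  with assms(2) have "l < 0" by simp
  from order_tendstoD(2)[OF assms(1) this] show ?thesis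
    by eventually_elim (simp add: \<open>l < 0\<close>)
qed

locale consistent_frequencies =
  fixes d :: nat and K :: "nat \<Rightarrow> nat \<Rightarrow> real" and X :: "nat \<Rightarrow> 'a \<Rightarrow> nat set" and w :: 'a
  assumes symmetric: "\<And>i j. i \<in> {1..d} \<Longrightarrow> j \<in> {1..d} \<Longrightarrow> K i j = K j i"
    and nonzero: "\<And>i j. i \<in> {1..d} \<Longrightarrow> j \<in> {1..d} \<Longrightarrow> K i j \<noteq> 0"
    and first_row_pos: "\<And>j. j \<in> {2..d} \<Longrightarrow> K 1 j > 0"
    and freq_tendsto: "\<And>s. s \<subseteq> {1..d} \<Longrightarrow> (\<lambda>T. empirical_freq X T w s) \<longlonglongrightarrow> det_on s K"
begin

lemma Kdiag_hat_tendsto: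
  assumes "i \<in> {1..d}"
  shows "(\<lambda>T. Kdiag_hat X T w i) \<longlonglongrightarrow> K i i"
  using freq_tendsto[of "{i}"] assms by (simp add: Kdiag_hat_eq_empirical_freq det_on_singleton)

lemma negcov_hat_tendsto:
  assumes "i \<in> {1..d}" "j \<in> {1..d}" "i \<noteq> j"
  shows "(\<lambda>T. negcov_hat X T w i j) \<longlonglongrightarrow> (K i j)\<^sup>2"
proof -
  have "(\<lambda>T. negcov_hat X T w i j) \<longlonglongrightarrow> K i i * K j j - det_on {i, j} K"
    unfolding negcov_hat_eq_empirical_freq
    using assms by (intro tendsto_intros Kdiag_hat_tendsto freq_tendsto) auto
  then show ?thesis
    using assms symmetric[of i j] by (simp add: det_on_doubleton power2_eq_square)
qed

lemma absK_hat_tendsto: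
  assumes "i \<in> {1..d}" "j \<in> {1..d}" "i \<noteq> j"
  shows "(\<lambda>T. absK_hat X T w i j) \<longlonglongrightarrow> \<bar>K i j\<bar>"
  using tendsto_real_sqrt[OF negcov_hat_tendsto[OF assms]] by (simp add: absK_hat_def)

lemma eventually_negcov_hat_nonneg:
  "eventually (\<lambda>T. \<forall>i\<in>{1..d}. \<forall>j\<in>{1..d}. i < j \<longrightarrow> negcov_hat X T w i j \<ge> 0) sequentially"
proof (intro eventually_ball_finite ballI finite_atLeastAtMost)
  fix i j assume ij: "i \<in> {1..d}" "j \<in> {1..d}"
  show "eventually (\<lambda>T. i < j \<longrightarrow> negcov_hat X T w i j \<ge> 0) sequentially"
  proof (cases "i < j")
    case True
    have "(K i j)\<^sup>2 > 0"
      using nonzero[OF ij] by simp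
    from order_tendstoD(1)[OF negcov_hat_tendsto this] show ?thesis
      using ij True by (auto elim: eventually_mono)
  qed simp
qed

lemma sgn_hat_eventually_eq:
  assumes "i \<in> {2..d}" "j \<in> {2..d}" "i \<noteq> j"
  shows "eventually (\<lambda>T. sgn_hat X T w i j = sgn (K i j)) sequentially"
proof -
  have ij: "i \<in> {1..d}" "j \<in> {1..d}" "1 \<in> {1..d}" "1 \<noteq> i" "1 \<noteq> j"
    using assms by auto
  have "(\<lambda>T. (1 / real T) * (\<Sum>t<T. xval X t 1 w * xval X t i w * xval X t j w)
      - Kdiag_hat X T w 1 * Kdiag_hat X T w i * Kdiag_hat X T w j
      + Kdiag_hat X T w 1 * (absK_hat X T w i j)\<^sup>2
      + Kdiag_hat X T w i * (absK_hat X T w 1 j)\<^sup>2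
      + Kdiag_hat X T w j * (absK_hat X T w 1 i)\<^sup>2)
    \<longlonglongrightarrow> det_on {1, i, j} K - K 1 1 * K i i * K j j + K 1 1 * \<bar>K i j\<bar>\<^sup>2
       + K i i * \<bar>K 1 j\<bar>\<^sup>2 + K j j * \<bar>K 1 i\<bar>\<^sup>2" (is "?E \<longlonglongrightarrow> _")
    unfolding triple_moment_eq_empirical_freq
    using ij assms(3) by (intro tendsto_intros freq_tendsto Kdiag_hat_tendsto absK_hat_tendsto) auto
  also have "det_on {1, i, j} K - K 1 1 * K i i * K j j + K 1 1 * \<bar>K i j\<bar>\<^sup>2
       + K i i * \<bar>K 1 j\<bar>\<^sup>2 + K j j * \<bar>K 1 i\<bar>\<^sup>2 = 2 * K 1 i * K 1 j * K i j"
    using ij assms(3) det_on_three_symmetric[of 1 i j K] symmetric[of 1 i] symmetric[of 1 j]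
      symmetric[of i j]
    by simp
  finally have "eventually (\<lambda>T. sgn (?E T) = sgn (2 * K 1 i * K 1 j * K i j)) sequentially"
    by (rule eventually_sgn_eq_sgn_limit) (use ij nonzero first_row_pos assms in auto)
  moreover have "sgn (2 * K 1 i * K 1 j * K i j) = sgn (K i j)"
    using first_row_pos assms by (simp add: sgn_mult)
  ultimately show ?thesis
    by (simp add: sgn_hat_def)
qed

lemma Kupper_hat_tendsto:
  assumes "i \<in> {1..d}" "j \<in> {1..d}" "i < j"
  shows "(\<lambda>T. Kupper_hat X T w i j) \<longlonglongrightarrow> K i j"
proof (cases "i = 1")
  case True
  then have "K 1 j > 0"
    using first_row_pos assms by auto
  then show ?thesis
    using absK_hat_tendsto[of 1 j] assms True by (simp add: Kupper_hat_def)
next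
  case False
  have "(\<lambda>T. sgn (K i j) * absK_hat X T w i j) \<longlonglongrightarrow> sgn (K i j) * \<bar>K i j\<bar>"
    using assms by (intro tendsto_intros absK_hat_tendsto) auto
  moreover have "eventually (\<lambda>T. sgn (K i j) * absK_hat X T w i j = Kupper_hat X T w i j) sequentially"
    using sgn_hat_eventually_eq[of i j] assms False
    by (auto simp: Kupper_hat_def elim: eventually_mono)
  ultimately show ?thesis
    by (simp add: sgn_mult_abs tendsto_cong)
qed

lemma K_hat_tendsto:
  assumes "i \<in> {1..d}" "j \<in> {1..d}"
  shows "(\<lambda>T. K_hat X T w i j) \<longlonglongrightarrow> K i j"
proof -
  consider "i = j" | "i < j" | "j < i"
    by linarith
  then show ?thesis
  proof cases
    case 1
    then show ?thesis
      using Kdiag_hat_tendsto assms by (simp add: K_hat_def)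
  next
    case 2
    then show ?thesis
      using Kupper_hat_tendsto assms by (simp add: K_hat_def)
  next
    case 3
    then show ?thesis
      using Kupper_hat_tendsto[of j i] symmetric assms by (simp add: K_hat_def)
  qed
qed

lemma eventually_sgn_K_hat_eq:
  "eventually (\<lambda>T. \<forall>i\<in>{1..d}. \<forall>j\<in>{1..d}. sgn (K_hat X T w i j) = sgn (K i j)) sequentially"
  using K_hat_tendsto nonzero
  by (intro eventually_ball_finite ballI finite_atLeastAtMost eventually_sgn_eq_sgn_limit) auto

theorem K_hat_consistent:
  "(\<forall>i\<in>{1..d}. \<forall>j\<in>{1..d}. (\<lambda>T. K_hat X T w i j) \<longlonglongrightarrow> K i j)
   \<and> eventually (\<lambda>T. (\<forall>i\<in>{1..d}. \<forall>j\<in>{1..d}. i < j \<longrightarrow> negcov_hat X T w i j \<ge> 0)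
       \<and> (\<forall>i\<in>{1..d}. \<forall>j\<in>{1..d}. sgn (K_hat X T w i j) = sgn (K i j))) sequentially"
  using K_hat_tendsto eventually_conj[OF eventually_negcov_hat_nonneg eventually_sgn_K_hat_eq]
  by blast

end

theorem proposition4:
  fixes M :: "'a measure" and d :: nat and K :: "nat \<Rightarrow> nat \<Rightarrow> real"
    and X :: "nat \<Rightarrow> 'a \<Rightarrow> nat set"
  assumes "prob_space M"
    and "d \<ge> 3"
    and sym: "\<forall>i\<in>{1..d}. \<forall>j\<in>{1..d}. K i j = K j i"
    and eig: "\<forall>lam. is_eigenvalue d K lam \<longrightarrow> 0 < lam \<and> lam < 1"
    and nonzero: "\<forall>i\<in>{1..d}. \<forall>j\<in>{1..d}. K i j \<noteq> 0"
    and pos: "\<forall>i\<in>{2..d}. K 1 i > 0"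
    and indep: "prob_space.indep_vars M (\<lambda>_. count_space (Pow {1..d})) X UNIV"
    and dpp: "\<forall>t. \<forall>s. s \<subseteq> {1..d} \<longrightarrow>
                 measure M {w \<in> space M. s \<subseteq> X t w} = det_on s K"
  shows "(AE w in M. \<forall>i\<in>{1..d}. \<forall>j\<in>{1..d}. (\<lambda>T. K_hat X T w i j) \<longlonglongrightarrow> K i j)
       \<and> (AE w in M. eventually (\<lambda>T.
            (\<forall>i\<in>{1..d}. \<forall>j\<in>{1..d}. i < j \<longrightarrow> negcov_hat X T w i j \<ge> 0)
          \<and> (\<forall>i\<in>{1..d}. \<forall>j\<in>{1..d}. sgn (K_hat X T w i j) = sgn (K i j))) sequentially)"
proof -
  have "AE w in M. \<forall>s\<in>Pow {1..d}. (\<lambda>T. empirical_freq X T w s) \<longlonglongrightarrow> det_on s K"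
    using dpp by (intro AE_finite_allI AE_empirical_freq_tendsto[OF \<open>prob_space M\<close> indep]) auto
  then have "AE w in M. consistent_frequencies d K X w"
    by (rule eventually_mono) (unfold_locales, use sym nonzero pos in auto)
  then have "AE w in M. (\<forall>i\<in>{1..d}. \<forall>j\<in>{1..d}. (\<lambda>T. K_hat X T w i j) \<longlonglongrightarrow> K i j)
      \<and> eventually (\<lambda>T. (\<forall>i\<in>{1..d}. \<forall>j\<in>{1..d}. i < j \<longrightarrow> negcov_hat X T w i j \<ge> 0)
          \<and> (\<forall>i\<in>{1..d}. \<forall>j\<in>{1..d}. sgn (K_hat X T w i j) = sgn (K i j))) sequentially"
    by (rule eventually_mono) (rule consistent_frequencies.K_hat_consistent)
  then show ?thesis
    by (simp only: eventually_conj_iff)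
qed

end
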